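(* Let $\tilde{\mathbf{G}}$ be a degree $n$ cover of $\mathbf{G}=\mathbf{GL}_r$ (split, over $S$) with first Brylinski–Deligne invariant $Q_{1,c}$, for an integer $c$. If $\gcd(n,1+r+2rc)=1$, then the dual group $\tilde G^\vee$ is isomorphic to $GL_r$. If $\gcd(n,r)=1$, then the derived subgroup of $\tilde G^\vee$ is isomorphic to $SL_r$, and thus there exists an isogeny $\tilde G^\vee\to GL_r$.
   Context: Let $\mathbf{T}\subset\mathbf{GL}_r$ be the diagonal torus with cocharacter lattice $Y=\mathbb{Z}^r$ (standard identification), Weyl group $S_r$ permuting coordinates, coroots $e_i-e_j$. For integers $q,c$, $Q_{q,c}$ is the unique Weyl-invariant quadratic form $Y\to\mathbb{Z}$ with $Q(1,-1,0,\dots,0)=q$ and $Q(1,0,\dots,0)=1+c$. Dual group of a degree $n$ cover with first invariant $Q$: set $\beta_Q(y_1,y_2)=n^{-1}(Q(y_1+y_2)-Q(y_1)-Q(y_2))$, $Y_{Q,n}=\{y\in Y:\beta_Q(y,y')\in\mathbb{Z}\ \forall y'\in Y\}$, $X_{Q,n}=\{x\in n^{-1}X:\langle x,y\rangle\in\mathbb{Z}\ \forall y\in Y_{Q,n}\}$ ($X$ the character lattice); for each root $\phi$ put $n_\phi=n/\gcd(n,Q(\phi^\vee))$, modified root $\tilde\phi=n_\phi^{-1}\phi$, modified coroot $\tilde\phi^\vee=n_\phi\phi^\vee$. The dual group $\tilde G^\vee$ is the split (pinned) reductive group over $\mathbb{Z}$ (here viewed via its complex points or as a group scheme) whose root datum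 has character lattice $Y_{Q,n}$, roots the modified coroots $\tilde\phi^\vee$, cocharacter lattice $X_{Q,n}$ and coroots the modified roots $\tilde\phi$. *)

theory Defs
  imports "HOL-Analysis.Analysis"
begin

text \<open>
  The torus T of GL_r is modelled with index type 'n, r = CARD('n).
  Character and cocharacter lattices X = Y = Z^r sit inside real^'n, and the
  perfect pairing is the dot product.  Characters of the dual group (which are
  elements of Y) and cocharacters of the dual group (elements of n^-1 X) are
  therefore all vectors in real^'n.
\<close>

definition Zlat :: "(real^'n) set" where
  "Zlat = {x. \<forall>i. x $ i \<in> \<int>}"

definition ev :: "'n::finite \<Rightarrow> real^'n" where
  "ev i = axis i 1"

text \<open>The unique Weyl-invariant quadratic form Q_{q,c}:
  Q(y) = (1+c) sum_i y_i^2 + (2+2c-q) sum_{i<j} y_i y_j,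
  where sum_{i<j} y_i y_j = ((sum_i y_i)^2 - sum_i y_i^2)/2.\<close>
definition Qf :: "int \<Rightarrow> int \<Rightarrow> real^'n \<Rightarrow> real" where
  "Qf q c y = real_of_int (1 + c) * (\<Sum>i\<in>UNIV. (y $ i)^2)
      + real_of_int (2 + 2*c - q) * (((\<Sum>i\<in>UNIV. y $ i)^2 - (\<Sum>i\<in>UNIV. (y $ i)^2)) / 2)"

definition betaQ :: "int \<Rightarrow> int \<Rightarrow> nat \<Rightarrow> real^'n \<Rightarrow> real^'n \<Rightarrow> real" where
  "betaQ q c n y1 y2 = (Qf q c (y1 + y2) - Qf q c y1 - Qf q c y2) / real n"

definition YQn :: "int \<Rightarrow> int \<Rightarrow> nat \<Rightarrow> (real^'n) set" where
  "YQn q c n = {y \<in> Zlat. \<forall>y'\<in>Zlat. betaQ q c n y y' \<in> \<int>}"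

definition XQn :: "int \<Rightarrow> int \<Rightarrow> nat \<Rightarrow> (real^'n) set" where
  "XQn q c n = {x. (\<forall>i. real n * x $ i \<in> \<int>) \<and> (\<forall>y\<in>YQn q c n. x \<bullet> y \<in> \<int>)}"

text \<open>Roots of GL_r: e_i - e_j (i ~= j), with coroot e_i - e_j.
  n_phi = n / gcd(n, Q(phi^vee)); Q(phi^vee) is an integer, taken via floor.\<close>
definition nphi :: "int \<Rightarrow> int \<Rightarrow> nat \<Rightarrow> 'n::finite \<Rightarrow> 'n \<Rightarrow> int" where
  "nphi q c n i j = int n div gcd (int n) \<lfloor>Qf q c (ev i - ev j :: real^'n)\<rfloor>"

text \<open>A root datum inside real^'n with dot-product pairing:
  (character lattice, cocharacter lattice, set of (root, coroot) pairs).\<close>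
type_synonym 'n rdatum = "(real^'n) set \<times> (real^'n) set \<times> ((real^'n) \<times> (real^'n)) set"

text \<open>Root datum of the dual group: characters Y_{Q,n}, roots the modified
  coroots n_phi phi^vee, cocharacters X_{Q,n}, coroots the modified roots phi/n_phi.\<close>
definition dual_datum :: "int \<Rightarrow> int \<Rightarrow> nat \<Rightarrow> ('n::finite) rdatum" where
  "dual_datum q c n = (YQn q c n, XQn q c n,
     {(real_of_int (nphi q c n i j) *\<^sub>R (ev i - ev j),
       (1 / real_of_int (nphi q c n i j)) *\<^sub>R (ev i - ev j)) | i j. i \<noteq> j})"

definition gl_datum :: "('n::finite) rdatum" where
  "gl_datum = (Zlat, Zlat, {(ev i - ev j, ev i - ev j) | i j. i \<noteq> j})"

text \<open>Root datum of the derived subgroup: cocharacters Y \<inter> span(coroots),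
  characters = restrictions of characters to span(coroots) (identified with
  vectors of that span via the dot product), same roots and coroots.\<close>
definition rd_derived :: "('n::finite) rdatum \<Rightarrow> 'n rdatum" where
  "rd_derived D = (case D of (X, Y, R) \<Rightarrow>
     (let V = span (snd ` R) in
       ({v \<in> V. \<exists>x\<in>X. \<forall>w\<in>V. v \<bullet> w = x \<bullet> w}, Y \<inter> V, R)))"

definition sl_datum :: "('n::finite) rdatum" where
  "sl_datum = rd_derived gl_datum"

definition rd_iso :: "('n::finite) rdatum \<Rightarrow> 'n rdatum \<Rightarrow> bool" where
  "rd_iso D D' = (case D of (X, Y, R) \<Rightarrow> case D' of (X', Y', R') \<Rightarrow>
     \<exists>f g. linear f \<and> linear g \<and> bij f \<and> bij g \<and> (\<forall>x y. f x \<bullet> g y = x \<bullet> y) \<and>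
       f ` X = X' \<and> g ` Y = Y' \<and> (\<lambda>(a, b). (f a, g b)) ` R = R')"

text \<open>(Central) isogeny G -> G' on root data: cocharacter map g: Y -> Y' injective
  with finite cokernel (g is a linear bijection of the ambient real space), dual
  character map X' -> X, matching roots and coroots.\<close>
definition rd_isogeny :: "('n::finite) rdatum \<Rightarrow> 'n rdatum \<Rightarrow> bool" where
  "rd_isogeny D D' = (case D of (X, Y, R) \<Rightarrow> case D' of (X', Y', R') \<Rightarrow>
     \<exists>f g. linear f \<and> linear g \<and> bij f \<and> bij g \<and> (\<forall>x y. f x \<bullet> g y = x \<bullet> y) \<and>
       X' \<subseteq> f ` X \<and> g ` Y \<subseteq> Y' \<and> (\<lambda>(a, b). (f a, g b)) ` R = R')"

end

theory Submission
  imports Defs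
begin

text \<open>
  For \<open>Q = Q\<^sub>1\<^sub>,\<^sub>c\<close> the polar form is \<open>\<beta>(y, y') = (y \<bullet> y' + (1 + 2c) \<Sigma>y \<Sigma>y') / n\<close> and
  every coroot has \<open>Q(\<alpha>\<^sup>\<or>) = 1\<close>, so all \<open>n\<^sub>\<alpha> = n\<close>: the modified roots and coroots are
  those of \<open>GL\<^sub>r\<close> scaled by \<open>n\<close> and \<open>1/n\<close>.  Testing \<open>\<beta>\<close> against the basis shows that
  \<open>y \<in> Y\<^sub>Q\<^sub>,\<^sub>n\<close> iff \<open>y\<^sub>k + (1 + 2c) \<Sigma>y \<equiv> 0 (mod n)\<close> for all \<open>k\<close>; hence \<open>nY \<subseteq> Y\<^sub>Q\<^sub>,\<^sub>n\<close>, every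
  \<open>y \<in> Y\<^sub>Q\<^sub>,\<^sub>n\<close> is a constant vector modulo \<open>n\<close>, and summing over \<open>k\<close> gives
  \<open>n | (1 + r + 2rc) \<Sigma>y\<close>.  If \<open>n\<close> is prime to \<open>1 + r + 2rc\<close> this forces \<open>Y\<^sub>Q\<^sub>,\<^sub>n = nY\<close>, and
  scaling characters by \<open>1/n\<close> and cocharacters by \<open>n\<close> is an isomorphism with the datum of \<open>GL\<^sub>r\<close>.
  On the span of the coroots constant vectors pair to zero, so the same scaling always
  identifies the derived datum with that of \<open>SL\<^sub>r\<close>, and \<open>nY \<subseteq> Y\<^sub>Q\<^sub>,\<^sub>n\<close> alone gives the isogeny.
\<close>

lemma ev_nth: "(ev i :: real^'n::finite) $ k = (if k = i then 1 else 0)"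
  by (simp add: ev_def axis_def)

lemma sum_ev [simp]: "(\<Sum>k\<in>UNIV. (ev i :: real^'n::finite) $ k) = 1"
  by (simp add: ev_nth)

lemma inner_ev [simp]: "y \<bullet> ev k = y $ k"
  by (simp add: ev_def inner_axis)

lemma Qf_root:
  assumes "i \<noteq> j"
  shows "Qf q c (ev i - ev j :: real^'n::finite) = of_int q"
proof -
  have "((ev i - ev j :: real^'n) $ k)^2 = (if k = i then 1 else 0) + (if k = j then 1 else 0)" for k
    using assms by (auto simp: ev_nth)
  then have "(\<Sum>k\<in>UNIV. ((ev i - ev j :: real^'n) $ k)^2) = 2"
    by (simp add: sum.distrib)
  moreover have "(\<Sum>k\<in>UNIV. (ev i - ev j :: real^'n) $ k) = 0"
    by (simp add: sum_subtractf)
  ultimately show ?thesis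
    unfolding Qf_def by (simp add: algebra_simps)
qed

lemma nphi_eq: "i \<noteq> j \<Longrightarrow> nphi q c n i j = int n div gcd (int n) q"
  by (simp add: nphi_def Qf_root)

lemma betaQ_eq:
  "betaQ q c n y y' =
     (of_int q * (y \<bullet> y') + of_int (2 + 2*c - q) * (\<Sum>i\<in>UNIV. y $ i) * (\<Sum>i\<in>UNIV. y' $ i))
     / real n"
proof -
  have "(\<Sum>i\<in>UNIV. ((y + y') $ i)^2) = (\<Sum>i\<in>UNIV. (y $ i)^2) + (\<Sum>i\<in>UNIV. (y' $ i)^2) + 2 * (y \<bullet> y')"
    unfolding inner_vec_def by (simp add: power2_sum sum.distrib sum_distrib_left mult.assoc)
  moreover have "(\<Sum>i\<in>UNIV. (y + y') $ i) = (\<Sum>i\<in>UNIV. y $ i) + (\<Sum>i\<in>UNIV. y' $ i)"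
    by (simp add: sum.distrib)
  ultimately have "Qf q c (y + y') - Qf q c y - Qf q c y'
      = of_int q * (y \<bullet> y') + of_int (2 + 2*c - q) * (\<Sum>i\<in>UNIV. y $ i) * (\<Sum>i\<in>UNIV. y' $ i)"
    unfolding Qf_def by (simp add: power2_sum field_simps)
  then show ?thesis
    unfolding betaQ_def by simp
qed

lemma Zlat_inner: "x \<in> Zlat \<Longrightarrow> y \<in> Zlat \<Longrightarrow> x \<bullet> y \<in> \<int>"
  unfolding inner_vec_def by (intro Ints_sum Ints_mult) (auto simp: Zlat_def)

lemma Zlat_sum: "x \<in> Zlat \<Longrightarrow> (\<Sum>i\<in>UNIV. x $ i) \<in> \<int>"
  by (intro Ints_sum) (auto simp: Zlat_def)

lemma scaleR_Zlat_in_YQn: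
  fixes w :: "real^'n::finite"
  assumes "w \<in> Zlat"
  shows "real n *\<^sub>R w \<in> YQn q c n"
  unfolding YQn_def
proof (intro CollectI conjI ballI)
  show "real n *\<^sub>R w \<in> Zlat"
    using assms by (auto simp: Zlat_def)
next
  fix y' :: "real^'n" assume y': "y' \<in> Zlat"
  let ?b = "of_int q * (w \<bullet> y') + of_int (2 + 2*c - q) * (\<Sum>i\<in>UNIV. w $ i) * (\<Sum>i\<in>UNIV. y' $ i)"
  have "betaQ q c n (real n *\<^sub>R w) y' = real n * ?b / real n"
    by (simp add: betaQ_eq sum_distrib_left[symmetric] algebra_simps)
  moreover have "?b \<in> \<int>"
    using assms y' by (intro Ints_add Ints_mult Zlat_inner Zlat_sum) auto
  ultimately show "betaQ q c n (real n *\<^sub>R w) y' \<in> \<int>"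
    by (cases "n = 0") simp_all
qed

lemma YQn_nth_Ints:
  assumes "y \<in> YQn q c n"
  shows "(of_int q * y $ k + of_int (2 + 2*c - q) * (\<Sum>i\<in>UNIV. y $ i)) / real n \<in> \<int>"
proof -
  have "betaQ q c n y (ev k) \<in> \<int>"
    using assms by (auto simp: YQn_def Zlat_def ev_nth)
  then show ?thesis by (simp add: betaQ_eq)
qed

lemma YQn_const_plus_scaled:
  fixes y :: "real^'n::finite"
  assumes "n \<noteq> 0" "y \<in> YQn 1 c n"
  shows "\<exists>a. \<exists>z\<in>Zlat. y = vec a + real n *\<^sub>R z"
proof -
  fix k0 :: 'n \<comment> \<open>any coordinate serves as the constant\<close>
  define z :: "real^'n" where "z = (1 / real n) *\<^sub>R (y - vec (y $ k0))"
  have "z $ k \<in> \<int>" for k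
  proof -
    let ?t = "of_int (1 + 2*c) * (\<Sum>i\<in>UNIV. y $ i)"
    have "(y $ k + ?t) / real n - (y $ k0 + ?t) / real n \<in> \<int>"
      using YQn_nth_Ints[OF assms(2)] by (intro Ints_diff) simp_all
    then show ?thesis by (simp add: z_def add_divide_distrib diff_divide_distrib)
  qed
  then have "z \<in> Zlat" by (simp add: Zlat_def)
  moreover have "y = vec (y $ k0) + real n *\<^sub>R z"
    using assms(1) by (simp add: z_def)
  ultimately show ?thesis by blast
qed

lemma YQn_eq_scaled_Zlat:
  fixes c :: int
  assumes "n \<noteq> 0" "coprime (int n) (1 + int CARD('n) + 2 * int CARD('n) * c)"
  shows "YQn 1 c n = (\<lambda>w. real n *\<^sub>R w) ` (Zlat :: (real^'n::finite) set)"
proof (intro equalityI subsetI)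
  fix y :: "real^'n" assume y: "y \<in> YQn 1 c n"
  then have "y \<in> Zlat" by (simp add: YQn_def)
  then obtain s where s: "(\<Sum>i\<in>UNIV. y $ i) = of_int s"
    using Zlat_sum by (blast elim: Ints_cases)
  let ?t = "of_int (1 + 2*c) * (\<Sum>i\<in>UNIV. y $ i)"
  have k: "(y $ k + ?t) / real n \<in> \<int>" for k
    using YQn_nth_Ints[OF y] by simp
  have "(\<Sum>k\<in>UNIV. (y $ k + ?t) / real n) \<in> \<int>"
    using k by (intro Ints_sum)
  also have "(\<Sum>k\<in>UNIV. (y $ k + ?t) / real n)
      = of_int (s * (1 + int CARD('n) + 2 * int CARD('n) * c)) / of_int (int n)"
    by (simp add: sum_divide_distrib[symmetric] sum.distrib s algebra_simps)
  finally have "int n dvd s"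
    unfolding of_int_div_of_int_in_Ints_iff using assms coprime_dvd_mult_left_iff by auto
  then have "of_int (s * (1 + 2*c)) / of_int (int n) \<in> (\<int> :: real set)"
    unfolding of_int_div_of_int_in_Ints_iff by simp
  then have sn: "?t / real n \<in> \<int>"
    by (simp add: s mult.commute)
  have "y $ k / real n \<in> \<int>" for k
    using Ints_diff[OF k sn] by (simp add: add_divide_distrib)
  then have "(1 / real n) *\<^sub>R y \<in> Zlat" by (simp add: Zlat_def)
  moreover have "y = real n *\<^sub>R ((1 / real n) *\<^sub>R y)" using assms(1) by simp
  ultimately show "y \<in> (\<lambda>w. real n *\<^sub>R w) ` Zlat" by blast
qed (auto intro: scaleR_Zlat_in_YQn)

lemma scaleR_XQn_in_Zlat: "x \<in> XQn q c n \<Longrightarrow> real n *\<^sub>R x \<in> Zlat"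
  by (simp add: XQn_def Zlat_def)

lemma scaleR_inverse_Zlat_in_XQn:
  assumes "n \<noteq> 0" "z \<in> Zlat" "\<And>y. y \<in> YQn q c n \<Longrightarrow> z \<bullet> y / real n \<in> \<int>"
  shows "(1 / real n) *\<^sub>R z \<in> XQn q c n"
  using assms by (auto simp: XQn_def Zlat_def)

lemma scaleR_XQn_eq_Zlat:
  assumes "n \<noteq> 0" "YQn q c n = (\<lambda>w. real n *\<^sub>R w) ` (Zlat :: (real^'n::finite) set)"
  shows "(\<lambda>x. real n *\<^sub>R x) ` XQn q c n = (Zlat :: (real^'n) set)"
proof (intro equalityI subsetI)
  fix z :: "real^'n" assume z: "z \<in> Zlat"
  have "(1 / real n) *\<^sub>R z \<in> XQn q c n"
  proof (rule scaleR_inverse_Zlat_in_XQn)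
    fix y :: "real^'n" assume "y \<in> YQn q c n"
    then obtain w where "w \<in> Zlat" "y = real n *\<^sub>R w"
      using assms(2) by auto
    then show "z \<bullet> y / real n \<in> \<int>"
      using assms(1) z by (simp add: Zlat_inner)
  qed (use assms z in auto)
  moreover have "z = real n *\<^sub>R ((1 / real n) *\<^sub>R z)" using assms(1) by simp
  ultimately show "z \<in> (\<lambda>x. real n *\<^sub>R x) ` XQn q c n" by blast
qed (auto intro: scaleR_XQn_in_Zlat)

definition coroot_span :: "(real^'n::finite) set" where
  "coroot_span = span {ev i - ev j | i j. i \<noteq> j}"

lemma sum_coroot_span: "w \<in> coroot_span \<Longrightarrow> (\<Sum>i\<in>UNIV. w $ i) = 0"
  unfolding coroot_span_def
proof (induction rule: span_induct)
  show "subspace {w :: real^'n. (\<Sum>i\<in>UNIV. w $ i) = 0}"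
    by (auto simp: subspace_def sum.distrib sum_distrib_left[symmetric])
qed (auto simp: sum_subtractf)

lemma YQn_inner_coroot_span:
  assumes "n \<noteq> 0" "y \<in> YQn 1 c n"
  shows "\<exists>z\<in>Zlat. \<forall>w\<in>coroot_span. y \<bullet> w = real n * (z \<bullet> w)"
proof -
  obtain a z where z: "z \<in> Zlat" and y: "y = vec a + real n *\<^sub>R z"
    using YQn_const_plus_scaled[OF assms] by blast
  have "vec a \<bullet> w = 0" if "w \<in> coroot_span" for w
    using sum_coroot_span[OF that] by (simp add: inner_vec_def sum_distrib_left[symmetric])
  then have "\<forall>w\<in>coroot_span. y \<bullet> w = real n * (z \<bullet> w)"
    by (auto simp: y inner_add_left)
  with z show ?thesis by blast
qed

lemma scaleR_XQn_coroot_span: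
  fixes c :: int
  assumes "n \<noteq> 0"
  shows "(\<lambda>x. real n *\<^sub>R x) ` (XQn 1 c n \<inter> coroot_span) = (Zlat \<inter> coroot_span :: (real^'n::finite) set)"
proof (intro equalityI subsetI)
  fix z :: "real^'n" assume z: "z \<in> Zlat \<inter> coroot_span"
  have "(1 / real n) *\<^sub>R z \<in> XQn 1 c n"
  proof (rule scaleR_inverse_Zlat_in_XQn)
    fix y :: "real^'n" assume "y \<in> YQn 1 c n"
    then obtain w where "w \<in> Zlat" "y \<bullet> z = real n * (w \<bullet> z)"
      using YQn_inner_coroot_span[OF assms] z by blast
    then show "z \<bullet> y / real n \<in> \<int>"
      using assms z by (simp add: inner_commute Zlat_inner)
  qed (use assms z in auto)
  moreover have "(1 / real n) *\<^sub>R z \<in> coroot_span"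
    using z by (simp add: coroot_span_def span_mul)
  moreover have "z = real n *\<^sub>R ((1 / real n) *\<^sub>R z)" using assms by simp
  ultimately show "z \<in> (\<lambda>x. real n *\<^sub>R x) ` (XQn 1 c n \<inter> coroot_span)" by blast
qed (auto intro: scaleR_XQn_in_Zlat simp: coroot_span_def span_mul)

lemma scaleR_restricted_YQn:
  assumes "n \<noteq> 0"
  shows "(\<lambda>x. (1 / real n) *\<^sub>R x) `
           {v \<in> coroot_span. \<exists>x\<in>YQn 1 c n. \<forall>w\<in>coroot_span. v \<bullet> w = x \<bullet> w}
       = {v \<in> coroot_span. \<exists>x\<in>Zlat. \<forall>w\<in>coroot_span. v \<bullet> w = x \<bullet> w}"
proof (intro equalityI subsetI)
  fix u assume "u \<in> (\<lambda>x. (1 / real n) *\<^sub>R x) `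
           {v \<in> coroot_span. \<exists>x\<in>YQn 1 c n. \<forall>w\<in>coroot_span. v \<bullet> w = x \<bullet> w}"
  then obtain v x where v: "u = (1 / real n) *\<^sub>R v" "v \<in> coroot_span" "x \<in> YQn 1 c n"
    and vx: "\<forall>w\<in>coroot_span. v \<bullet> w = x \<bullet> w"
    by blast
  obtain z where "z \<in> Zlat" and xz: "\<forall>w\<in>coroot_span. x \<bullet> w = real n * (z \<bullet> w)"
    using YQn_inner_coroot_span[OF assms v(3)] by blast
  moreover have "u \<in> coroot_span"
    using v by (simp add: coroot_span_def span_mul)
  moreover have "\<forall>w\<in>coroot_span. u \<bullet> w = z \<bullet> w"
    using v(1) vx xz assms by simp
  ultimately show "u \<in> {v \<in> coroot_span. \<exists>x\<in>Zlat. \<forall>w\<in>coroot_span. v \<bullet> w = x \<bullet> w}"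
    by blast
next
  fix u assume "u \<in> {v \<in> coroot_span. \<exists>x\<in>Zlat. \<forall>w\<in>coroot_span. v \<bullet> w = x \<bullet> w}"
  then obtain z where u: "u \<in> coroot_span" "z \<in> Zlat" "\<forall>w\<in>coroot_span. u \<bullet> w = z \<bullet> w"
    by blast
  have "real n *\<^sub>R u \<in> {v \<in> coroot_span. \<exists>x\<in>YQn 1 c n. \<forall>w\<in>coroot_span. v \<bullet> w = x \<bullet> w}"
    using u scaleR_Zlat_in_YQn[OF u(2)]
    by (auto simp: coroot_span_def span_mul intro!: bexI[of _ "real n *\<^sub>R z"])
  moreover have "u = (1 / real n) *\<^sub>R (real n *\<^sub>R u)" using assms by simp
  ultimately show "u \<in> (\<lambda>x. (1 / real n) *\<^sub>R x) `
           {v \<in> coroot_span. \<exists>x\<in>YQn 1 c n. \<forall>w\<in>coroot_span. v \<bullet> w = x \<bullet> w}"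
    by blast
qed

lemma bij_scaleR: "(N::real) \<noteq> 0 \<Longrightarrow> bij (\<lambda>x::'a::real_vector. N *\<^sub>R x)"
  by (rule o_bij[of "\<lambda>x. (1 / N) *\<^sub>R x"]) (auto simp: fun_eq_iff)

lemma rd_iso_scaleR:
  assumes "(N::real) \<noteq> 0"
    and "(\<lambda>x. (1 / N) *\<^sub>R x) ` X = X'" "(\<lambda>y. N *\<^sub>R y) ` Y = Y'"
    and "(\<lambda>(a, b). ((1 / N) *\<^sub>R a, N *\<^sub>R b)) ` R = R'"
  shows "rd_iso (X, Y, R) (X', Y', R')"
  unfolding rd_iso_def prod.case
  by (intro exI[of _ "\<lambda>x. (1 / N) *\<^sub>R x"] exI[of _ "\<lambda>y. N *\<^sub>R y"])
    (use assms in \<open>auto intro: bij_scaleR\<close>)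

lemma rd_isogeny_scaleR:
  assumes "(N::real) \<noteq> 0"
    and "X' \<subseteq> (\<lambda>x. (1 / N) *\<^sub>R x) ` X" "(\<lambda>y. N *\<^sub>R y) ` Y \<subseteq> Y'"
    and "(\<lambda>(a, b). ((1 / N) *\<^sub>R a, N *\<^sub>R b)) ` R = R'"
  shows "rd_isogeny (X, Y, R) (X', Y', R')"
  unfolding rd_isogeny_def prod.case
  by (intro exI[of _ "\<lambda>x. (1 / N) *\<^sub>R x"] exI[of _ "\<lambda>y. N *\<^sub>R y"])
    (use assms in \<open>auto intro: bij_scaleR\<close>)

lemma dual_datum_1:
  "(dual_datum 1 c n :: ('n::finite) rdatum) = (YQn 1 c n, XQn 1 c n,
     {(real n *\<^sub>R (ev i - ev j), (1 / real n) *\<^sub>R (ev i - ev j)) | i j. i \<noteq> j})"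
proof -
  have "{(real_of_int (nphi 1 c n i j) *\<^sub>R (ev i - ev j), (1 / real_of_int (nphi 1 c n i j)) *\<^sub>R (ev i - ev j)) | i j. i \<noteq> j}
      = {(real n *\<^sub>R (ev i - ev j :: real^'n), (1 / real n) *\<^sub>R (ev i - ev j)) | i j. i \<noteq> j}"
    using nphi_eq[of _ _ 1 c n] by force
  then show ?thesis unfolding dual_datum_def by simp
qed

lemma dual_roots_scaleR:
  assumes "n \<noteq> 0"
  shows "(\<lambda>(a, b). ((1 / real n) *\<^sub>R a, real n *\<^sub>R b)) `
           {(real n *\<^sub>R (ev i - ev j), (1 / real n) *\<^sub>R (ev i - ev j)) | i j. i \<noteq> j}
       = {(ev i - ev j :: real^'n::finite, ev i - ev j) | i j. i \<noteq> j}"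
proof (intro equalityI subsetI)
  fix p assume "p \<in> {(ev i - ev j :: real^'n, ev i - ev j) | i j. i \<noteq> j}"
  then obtain i j where p: "p = (ev i - ev j, ev i - ev j)" "i \<noteq> j" by blast
  then have "p = (\<lambda>(a, b). ((1 / real n) *\<^sub>R a, real n *\<^sub>R b))
                   (real n *\<^sub>R (ev i - ev j), (1 / real n) *\<^sub>R (ev i - ev j))"
    using assms by simp
  with p(2) show "p \<in> (\<lambda>(a, b). ((1 / real n) *\<^sub>R a, real n *\<^sub>R b)) `
           {(real n *\<^sub>R (ev i - ev j), (1 / real n) *\<^sub>R (ev i - ev j)) | i j. i \<noteq> j}"
    by blast
qed (use assms in \<open>auto; blast\<close>)

lemma span_scaleR_image:
  assumes "(c::real) \<noteq> 0"
  shows "span ((\<lambda>x. c *\<^sub>R x) ` S) = span S"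
proof
  show "span ((\<lambda>x. c *\<^sub>R x) ` S) \<subseteq> span S"
    by (intro span_minimal) (auto intro: span_mul span_base)
  have "x \<in> span ((\<lambda>x. c *\<^sub>R x) ` S)" if "x \<in> S" for x
    using span_mul[OF span_base[OF imageI[OF that]], of "1 / c" "\<lambda>x. c *\<^sub>R x"] assms by simp
  then show "span S \<subseteq> span ((\<lambda>x. c *\<^sub>R x) ` S)"
    by (intro span_minimal) auto
qed

lemma span_dual_coroots:
  assumes "n \<noteq> 0"
  shows "span (snd ` {(real n *\<^sub>R (ev i - ev j), (1 / real n) *\<^sub>R (ev i - ev j)) | i j. i \<noteq> j})
       = (coroot_span :: (real^'n::finite) set)"
proof -
  have "snd ` {(real n *\<^sub>R (ev i - ev j), (1 / real n) *\<^sub>R (ev i - ev j)) | i j. i \<noteq> j}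
      = (\<lambda>x. (1 / real n) *\<^sub>R x) ` {ev i - ev j :: real^'n | i j. i \<noteq> j}"
    by force
  then show ?thesis
    unfolding coroot_span_def using assms by (simp add: span_scaleR_image)
qed

lemma span_gl_coroots:
  "span (snd ` {(ev i - ev j, ev i - ev j) | i j. i \<noteq> j}) = (coroot_span :: (real^'n::finite) set)"
  unfolding coroot_span_def by (rule arg_cong[where f = span]) force

lemma dual_datum_iso_gl:
  fixes c :: int
  assumes "n \<noteq> 0" and "coprime (int n) (1 + int CARD('n) + 2 * int CARD('n) * c)"
  shows "rd_iso (dual_datum 1 c n :: ('n::finite) rdatum) gl_datum"
proof -
  have Y: "YQn 1 c n = (\<lambda>w. real n *\<^sub>R w) ` (Zlat :: (real^'n) set)"
    using YQn_eq_scaled_Zlat assms by blast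
  then have "(\<lambda>x. (1 / real n) *\<^sub>R x) ` YQn 1 c n = (Zlat :: (real^'n) set)"
    using assms(1) by (simp add: image_image)
  then show ?thesis
    unfolding dual_datum_1 gl_datum_def
    using assms(1) scaleR_XQn_eq_Zlat[OF assms(1) Y] dual_roots_scaleR[OF assms(1)]
    by (intro rd_iso_scaleR) simp_all
qed

lemma derived_dual_datum_iso_sl:
  assumes "n \<noteq> 0"
  shows "rd_iso (rd_derived (dual_datum 1 c n :: ('n::finite) rdatum)) sl_datum"
  unfolding sl_datum_def dual_datum_1 gl_datum_def rd_derived_def prod.case Let_def
    span_dual_coroots[OF assms] span_gl_coroots
  using assms scaleR_restricted_YQn[OF assms] scaleR_XQn_coroot_span[OF assms]
    dual_roots_scaleR[OF assms]
  by (intro rd_iso_scaleR) simp_all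

lemma dual_datum_isogeny_gl:
  assumes "n \<noteq> 0"
  shows "rd_isogeny (dual_datum 1 c n :: ('n::finite) rdatum) gl_datum"
  unfolding dual_datum_1 gl_datum_def
proof (rule rd_isogeny_scaleR[OF _ _ _ dual_roots_scaleR[OF assms]])
  show "(Zlat :: (real^'n) set) \<subseteq> (\<lambda>x. (1 / real n) *\<^sub>R x) ` YQn 1 c n"
  proof
    fix z :: "real^'n" assume "z \<in> Zlat"
    then have "real n *\<^sub>R z \<in> YQn 1 c n" by (rule scaleR_Zlat_in_YQn)
    moreover have "z = (1 / real n) *\<^sub>R (real n *\<^sub>R z)" using assms by simp
    ultimately show "z \<in> (\<lambda>x. (1 / real n) *\<^sub>R x) ` YQn 1 c n" by blast
  qed
qed (use assms scaleR_XQn_in_Zlat in auto)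

theorem mainTheorem5:
  fixes n :: nat and c :: int
  assumes "n \<ge> 1"
  shows "(gcd (int n) (1 + int CARD('n) + 2 * int CARD('n) * c) = 1 \<longrightarrow>
            rd_iso (dual_datum 1 c n :: ('n::finite) rdatum) gl_datum)
       \<and> (gcd n CARD('n) = 1 \<longrightarrow>
            rd_iso (rd_derived (dual_datum 1 c n :: 'n rdatum)) sl_datum
            \<and> rd_isogeny (dual_datum 1 c n :: 'n rdatum) gl_datum)"
proof -
  have n: "n \<noteq> 0" using assms by simp
  show ?thesis
    using dual_datum_iso_gl[OF n, where 'n = 'n] derived_dual_datum_iso_sl[OF n, where 'n = 'n]
      dual_datum_isogeny_gl[OF n, where 'n = 'n]
    by (simp add: coprime_iff_gcd_eq_1)
qed

end
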